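(* Let $n$ entities move in $\mathbb{R}^1$ during a time interval $[a,b]$ along non-horizontal lines $\sigma(t)=\alpha_\sigma t+\beta_\sigma$ (no three through a common point), and take $\varepsilon=0$, so a trajectoid is a function $\mathcal{T}:[a,b]\to\mathcal{X}$ that may switch from $\sigma$ to $\psi$ only at a time $t$ with $\sigma(t)=\psi(t)$. Then any trajectoid minimizing $\mathcal{D}'(\mathcal{T})=\int_a^b|\mathcal{T}(t)(t)|\,dt$ has at most $8n$ vertices (points of the curve $t\mapsto\mathcal{T}(t)(t)$ where it switches from one line to another).
   Context: Here the ideal trajectory (midpoint of highest and lowest entity) is assumed to coincide with the axis $y=0$ on $[a,b]$, so $\mathcal{D}'$ measures the area between the trajectoid and the ideal trajectory. *)

theory Defs
  imports "HOL-Analysis.Analysis"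
begin

definition entpos :: "(nat \<Rightarrow> real) \<Rightarrow> (nat \<Rightarrow> real) \<Rightarrow> nat \<Rightarrow> real \<Rightarrow> real" where
  "entpos alpha beta i t = alpha i * t + beta i"

text \<open>Trajectoid with epsilon = 0: a choice of entity T t for each time t in [a,b];
  near every time t, every entity chosen at nearby times is at the same position at time t
  as the entity chosen at t, i.e. a switch between entities happens only at a common point.\<close>
definition is_trajectoid ::
  "(nat \<Rightarrow> real) \<Rightarrow> (nat \<Rightarrow> real) \<Rightarrow> nat \<Rightarrow> real \<Rightarrow> real \<Rightarrow> (real \<Rightarrow> nat) \<Rightarrow> bool" where
  "is_trajectoid alpha beta n a b T \<longleftrightarrow>
     (\<forall>t\<in>{a..b}. T t < n) \<and>
     (\<forall>t\<in>{a..b}. \<exists>\<delta>>0. \<forall>s\<in>{a..b}. \<bar>s - t\<bar> < \<delta> \<longrightarrow>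
         entpos alpha beta (T s) t = entpos alpha beta (T t) t)"

definition Dprime ::
  "(nat \<Rightarrow> real) \<Rightarrow> (nat \<Rightarrow> real) \<Rightarrow> real \<Rightarrow> real \<Rightarrow> (real \<Rightarrow> nat) \<Rightarrow> real" where
  "Dprime alpha beta a b T = integral {a..b} (\<lambda>t. \<bar>entpos alpha beta (T t) t\<bar>)"

definition vertex_times ::
  "(nat \<Rightarrow> real) \<Rightarrow> (nat \<Rightarrow> real) \<Rightarrow> real \<Rightarrow> real \<Rightarrow> (real \<Rightarrow> nat) \<Rightarrow> real set" where
  "vertex_times alpha beta a b T =
     {t\<in>{a<..<b}. \<forall>\<delta>>0. \<exists>s\<in>{a..b}. \<bar>s - t\<bar> < \<delta> \<and>
         (alpha (T s), beta (T s)) \<noteq> (alpha (T t), beta (T t))}"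

end

theory Submission
  imports Defs
begin

(* Write p t = T(t)(t) for the curve of a trajectoid T; it is continuous. Minimality of D' gives a
   shortcut principle: if the curve is strictly farther from the axis than some line i, on the same
   side, it stays so until line i reaches the axis, since otherwise following line i on the maximal
   run where the curve is beyond it would lower D'.
   At a vertex t of a minimal trajectoid exactly two lines meet. If p t = 0, t is one of at most n
   zeros of the curve. Otherwise the shortcut principle shows that t is the last time the curve uses
   one of the two lines, or the first time, or a separation point, where the curve leaves a line i
   and stays beyond it up to the zero of line i; each line has at most one point of each of these
   three kinds. In the remaining case t is a peak: the curve arrives on the line moving away from
   the axis and leaves on the one moving towards it. Between two peaks lies a zero or a separation
   point, so there are at most 2n + 1 peaks, and at most 6n + 1 <= 8n vertices. *)

section \<open>Curves of trajectoids\<close>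

definition trajectoid_curve :: "(nat \<Rightarrow> real) \<Rightarrow> (nat \<Rightarrow> real) \<Rightarrow> (real \<Rightarrow> nat) \<Rightarrow> real \<Rightarrow> real" where
  "trajectoid_curve alpha beta T t = entpos alpha beta (T t) t"

lemma continuous_on_trajectoid_curve:
  assumes traj: "is_trajectoid alpha beta n a b T"
  shows "continuous_on {a..b} (trajectoid_curve alpha beta T)"
  unfolding continuous_on_iff
proof (intro ballI allI impI)
  fix x e :: real assume x: "x \<in> {a..b}" and "0 < e"
  define K where "K = (\<Sum>i<n. \<bar>alpha i\<bar>) + 1"
  have "0 < K" unfolding K_def by (simp add: add_nonneg_pos sum_nonneg)
  have slope_le: "\<bar>alpha i\<bar> \<le> K" if "i < n" for i
    using member_le_sum[of i "{..<n}" "\<lambda>i. \<bar>alpha i\<bar>"] that unfolding K_def by auto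
  obtain d where "0 < d" and d: "\<forall>s\<in>{a..b}. \<bar>s - x\<bar> < d \<longrightarrow> entpos alpha beta (T s) x = entpos alpha beta (T x) x"
    using traj x unfolding is_trajectoid_def by blast
  show "\<exists>d>0. \<forall>y\<in>{a..b}. dist y x < d \<longrightarrow>
      dist (trajectoid_curve alpha beta T y) (trajectoid_curve alpha beta T x) < e"
  proof (intro exI[of _ "min d (e / K)"] conjI ballI impI)
    show "0 < min d (e / K)" using \<open>0 < d\<close> \<open>0 < e\<close> \<open>0 < K\<close> by simp
    fix y assume y: "y \<in> {a..b}" and "dist y x < min d (e / K)"
    then have "\<bar>y - x\<bar> < d" "K * \<bar>y - x\<bar> < e"
      using \<open>0 < K\<close> by (auto simp: dist_real_def field_simps)
    have "T y < n" using traj y unfolding is_trajectoid_def by blast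
    have "trajectoid_curve alpha beta T y - trajectoid_curve alpha beta T x = alpha (T y) * (y - x)"
      using d y \<open>\<bar>y - x\<bar> < d\<close> unfolding trajectoid_curve_def entpos_def by (auto simp: algebra_simps)
    moreover have "\<bar>alpha (T y) * (y - x)\<bar> \<le> K * \<bar>y - x\<bar>"
      unfolding abs_mult using slope_le[OF \<open>T y < n\<close>] by (simp add: mult_right_mono)
    ultimately show "dist (trajectoid_curve alpha beta T y) (trajectoid_curve alpha beta T x) < e"
      using \<open>K * \<bar>y - x\<bar> < e\<close> by (simp add: dist_real_def)
  qed
qed

lemma is_trajectoid_switch_to_line:
  assumes traj: "is_trajectoid alpha beta n a b T" and "i < n" and "a \<le> c" "c < d" "d \<le> b"
    and left: "c = a \<or> entpos alpha beta i c = trajectoid_curve alpha beta T c"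
    and right: "d = b \<or> entpos alpha beta i d = trajectoid_curve alpha beta T d"
  shows "is_trajectoid alpha beta n a b (\<lambda>u. if u \<in> {c..d} then i else T u)"
    (is "is_trajectoid _ _ _ _ _ ?T'")
  unfolding is_trajectoid_def
proof (intro conjI ballI)
  fix t assume t: "t \<in> {a..b}"
  show "?T' t < n" using traj t \<open>i < n\<close> unfolding is_trajectoid_def by auto
  obtain e where "0 < e"
    and e: "\<And>s. s \<in> {a..b} \<Longrightarrow> \<bar>s - t\<bar> < e \<Longrightarrow> entpos alpha beta (T s) t = entpos alpha beta (T t) t"
    using traj t unfolding is_trajectoid_def by blast
  consider "t < c \<or> d < t" | "c < t \<and> t < d" | "t = c \<or> t = d" by linarith
  then show "\<exists>\<delta>>0. \<forall>s\<in>{a..b}. \<bar>s - t\<bar> < \<delta> \<longrightarrow> entpos alpha beta (?T' s) t = entpos alpha beta (?T' t) t"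
  proof cases
    case 1
    show ?thesis
    proof (intro exI[of _ "min e (max (c - t) (t - d))"] conjI ballI impI)
      show "0 < min e (max (c - t) (t - d))" using 1 \<open>0 < e\<close> by auto
      fix s assume s: "s \<in> {a..b}" "\<bar>s - t\<bar> < min e (max (c - t) (t - d))"
      with 1 have "s \<notin> {c..d}" "t \<notin> {c..d}" by (auto simp: abs_less_iff)
      with s e show "entpos alpha beta (?T' s) t = entpos alpha beta (?T' t) t" by auto
    qed
  next
    case 2
    show ?thesis
    proof (intro exI[of _ "min (t - c) (d - t)"] conjI ballI impI)
      show "0 < min (t - c) (d - t)" using 2 by auto
      fix s assume "\<bar>s - t\<bar> < min (t - c) (d - t)"
      with 2 have "s \<in> {c..d}" "t \<in> {c..d}" by (auto simp: abs_less_iff)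
      then show "entpos alpha beta (?T' s) t = entpos alpha beta (?T' t) t" by simp
    qed
  next
    case 3
    show ?thesis
    proof (intro exI[of _ "min e (d - c)"] conjI ballI impI)
      show "0 < min e (d - c)" using \<open>0 < e\<close> \<open>c < d\<close> by auto
      fix s assume s: "s \<in> {a..b}" "\<bar>s - t\<bar> < min e (d - c)"
      have "entpos alpha beta (T s) t = entpos alpha beta i t" if "s \<notin> {c..d}"
      proof -
        from 3 s that have "t = c \<and> c \<noteq> a \<or> t = d \<and> d \<noteq> b" by (auto simp: abs_less_iff)
        with left right have "entpos alpha beta i t = entpos alpha beta (T t) t"
          unfolding trajectoid_curve_def by auto
        with e s show ?thesis by simp
      qed
      moreover have "t \<in> {c..d}" using 3 \<open>c < d\<close> by auto
      ultimately show "entpos alpha beta (?T' s) t = entpos alpha beta (?T' t) t" by simp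
    qed
  qed
qed

lemma integral_less_if_le_and_less_at:
  fixes f g :: "real \<Rightarrow> real"
  assumes "a < b" and f: "continuous_on {a..b} f" and g: "continuous_on {a..b} g"
    and le: "\<And>x. x \<in> {a..b} \<Longrightarrow> f x \<le> g x" and "s \<in> {a..b}" and "f s < g s"
  shows "integral {a..b} f < integral {a..b} g"
proof -
  have diff: "continuous_on {a..b} (\<lambda>x. g x - f x)" using f g by (intro continuous_intros)
  have "integral {a..b} (\<lambda>x. g x - f x) \<noteq> 0"
    using integral_eq_0_iff[OF diff \<open>a < b\<close>] le \<open>s \<in> {a..b}\<close> \<open>f s < g s\<close> by fastforce
  moreover have "0 \<le> integral {a..b} (\<lambda>x. g x - f x)"
    using diff le integrable_continuous_interval by (intro integral_nonneg) auto
  moreover have "integral {a..b} (\<lambda>x. g x - f x) = integral {a..b} g - integral {a..b} f"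
    using f g integrable_continuous_interval by (intro integral_diff) auto
  ultimately show ?thesis by linarith
qed

lemma continuous_positive_run_left:
  fixes q :: "real \<Rightarrow> real"
  assumes cont: "continuous_on {a..s} q" and "a \<le> s" and "0 < q s"
  obtains c where "a \<le> c" "c \<le> s" "0 \<le> q c" "c = a \<or> q c = 0" "\<forall>u\<in>{c<..s}. 0 < q u"
proof (cases "{u\<in>{a..s}. q u \<le> 0} = {}")
  case True
  then show ?thesis using that[of a] \<open>a \<le> s\<close> by force
next
  case False
  have "closed ({a..s} \<inter> q -` {..0})"
    using continuous_closed_preimage[OF cont] by auto
  moreover have "{u\<in>{a..s}. q u \<le> 0} = {a..s} \<inter> q -` {..0}" by auto
  ultimately have "compact {u\<in>{a..s}. q u \<le> 0}"
    using compact_eq_bounded_closed bounded_Int bounded_closed_interval by metis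
  then obtain c where c: "c \<in> {a..s}" "q c \<le> 0" and above: "\<forall>u\<in>{a..s}. q u \<le> 0 \<longrightarrow> u \<le> c"
    using compact_attains_sup[OF _ False] by auto
  obtain w where "c \<le> w" "w \<le> s" "q w = 0"
    using IVT'[of q c 0 s] c \<open>0 < q s\<close> continuous_on_subset[OF cont, of "{c..s}"] by auto
  moreover have "w \<le> c"
    by (rule above[rule_format]) (use c \<open>c \<le> w\<close> \<open>w \<le> s\<close> \<open>q w = 0\<close> in auto)
  ultimately have "q c = 0" by simp
  moreover have "0 < q u" if "u \<in> {c<..s}" for u
    using above[rule_format, of u] that c by fastforce
  ultimately show ?thesis using that[of c] c by auto
qed

lemma continuous_positive_run_right:
  fixes q :: "real \<Rightarrow> real"
  assumes cont: "continuous_on {s..b} q" and "s \<le> b" and "0 < q s"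
  obtains d where "s \<le> d" "d \<le> b" "0 \<le> q d" "d = b \<or> q d = 0" "\<forall>u\<in>{s..<d}. 0 < q u"
proof -
  have "(\<lambda>u. - u) ` {-b..-s} \<subseteq> {s..b}" by auto
  then have "continuous_on {-b..-s} (\<lambda>u. q (- u))"
    by (rule continuous_on_compose2[OF cont continuous_on_minus[OF continuous_on_id]])
  then obtain c where c: "- b \<le> c" "c \<le> - s" "0 \<le> q (- c)" "c = - b \<or> q (- c) = 0"
    and pos: "\<forall>u\<in>{c<..-s}. 0 < q (- u)"
    by (rule continuous_positive_run_left) (use assms in auto)
  have "0 < q u" if "u \<in> {s..<-c}" for u
    using pos[rule_format, of "- u"] that by simp
  then show ?thesis by (intro that[of "- c"]) (use c in auto)
qed

lemma continuous_positive_run: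
  fixes q :: "real \<Rightarrow> real"
  assumes "a < b" and cont: "continuous_on {a..b} q" and "s \<in> {a..b}" "0 < q s"
  obtains c d where "a \<le> c" "c \<le> s" "s \<le> d" "d \<le> b" "c < d" "c = a \<or> q c = 0" "d = b \<or> q d = 0"
    "\<forall>u\<in>{c..d}. 0 \<le> q u" "\<forall>u\<in>{c<..<d}. 0 < q u"
proof -
  obtain c where c: "a \<le> c" "c \<le> s" "0 \<le> q c" "c = a \<or> q c = 0" and left: "\<forall>u\<in>{c<..s}. 0 < q u"
    using continuous_positive_run_left[of a s q] continuous_on_subset[OF cont] assms(3,4) by auto
  obtain d where d: "s \<le> d" "d \<le> b" "0 \<le> q d" "d = b \<or> q d = 0" and right: "\<forall>u\<in>{s..<d}. 0 < q u"
    using continuous_positive_run_right[of s b q] continuous_on_subset[OF cont] assms(3,4) by auto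
  have "c < d"
  proof (rule ccontr)
    assume "\<not> c < d"
    then have "c = s" "d = s" using c d by auto
    then show False using c(4) d(4) \<open>a < b\<close> \<open>0 < q s\<close> by auto
  qed
  moreover have "0 < q u" if "u \<in> {c<..<d}" for u
    using that left[rule_format, of u] right[rule_format, of u] by (cases "u \<le> s") auto
  moreover have "0 \<le> q u" if "u \<in> {c..d}" for u
    using that c(3) d(3) calculation(2)[of u] by (cases "u = c \<or> u = d") auto
  ultimately show ?thesis using that c d by blast
qed

text \<open>Below, \<sigma> \<in> {-1, 1} selects a side of the axis and dir \<in> {-1, 1} a direction of time, so
  that one lemma covers all mirror-image situations.\<close>

lemma abs_less_abs_if_same_side:
  fixes \<sigma> x y :: real
  assumes "\<sigma> \<in> {-1, 1}" "0 < \<sigma> * x" "\<sigma> * x < \<sigma> * y"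
  shows "\<bar>x\<bar> < \<bar>y\<bar>"
  using assms by auto

lemma mult_sign_swap:
  fixes dir \<sigma> c x :: real
  assumes "dir \<in> {-1, 1}"
  shows "\<sigma> * (c * x) = (dir * \<sigma> * c) * (dir * x)"
  using assms by auto

lemma closed_segment_if_directed:
  fixes dir x u v :: real
  assumes "dir \<in> {-1, 1}" "0 \<le> dir * (x - u)" "0 \<le> dir * (v - x)"
  shows "x \<in> closed_segment u v"
  using assms by (auto simp: closed_segment_eq_real_ivl)

lemma open_segment_if_directed:
  fixes dir x u v :: real
  assumes "dir \<in> {-1, 1}" "0 < dir * (x - u)" "0 < dir * (v - x)"
  shows "x \<in> open_segment u v"
  using assms by (auto simp: open_segment_eq_real_ivl)

lemma closed_segment_directedD:
  fixes dir x u v :: real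
  assumes "dir \<in> {-1, 1}" "x \<in> closed_segment u v" "0 \<le> dir * (v - u)"
  shows "0 \<le> dir * (x - u)" "0 \<le> dir * (v - x)"
  using assms by (auto simp: closed_segment_eq_real_ivl split: if_splits)

lemma open_segment_directedD:
  fixes dir x u v :: real
  assumes "dir \<in> {-1, 1}" "x \<in> open_segment u v" "0 < dir * (v - u)"
  shows "0 < dir * (x - u)" "0 < dir * (v - x)"
  using assms by (auto simp: open_segment_eq_real_ivl split: if_splits)

lemma card_UN_subsingletons_le:
  assumes "\<And>i x y. i < n \<Longrightarrow> x \<in> A i \<Longrightarrow> y \<in> A i \<Longrightarrow> x = y"
  shows "finite (\<Union>i<n. A i) \<and> card (\<Union>i<n. A i) \<le> n"
proof -
  have "A i = {} \<or> (\<exists>x. A i = {x})" if "i < n" for i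
    using assms[OF that] by blast
  then have A: "finite (A i) \<and> card (A i) \<le> 1" if "i < n" for i
    using that by fastforce
  then have "card (\<Union>i<n. A i) \<le> (\<Sum>i<n. 1)"
    using card_UN_le[of "{..<n}" A] sum_mono[of "{..<n}" "\<lambda>i. card (A i)" "\<lambda>_. 1"] by force
  then show ?thesis using A by auto
qed

text \<open>Mapping each point of G but the largest to the least point of S above it is injective.\<close>
lemma card_le_Suc_card_if_separated_finite:
  fixes G S :: "real set"
  assumes "finite G" "finite S" and sep: "\<And>x y. x \<in> G \<Longrightarrow> y \<in> G \<Longrightarrow> x < y \<Longrightarrow> \<exists>s\<in>S. x < s \<and> s < y"
  shows "card G \<le> card S + 1"
proof (cases "G = {}")
  case False
  define next_sep where "next_sep x = Min {s\<in>S. x < s}" for x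
  have next_sep: "next_sep x \<in> S" "x < next_sep x" "\<forall>s\<in>S. x < s \<longrightarrow> next_sep x \<le> s"
    if x: "x \<in> G - {Max G}" for x
  proof -
    have "x < Max G" using x Max_ge[OF \<open>finite G\<close>, of x] by auto
    then obtain s where "s \<in> S" "x < s"
      using sep[of x "Max G"] x Max_in[OF \<open>finite G\<close> False] by blast
    then have "{s\<in>S. x < s} \<noteq> {}" by blast
    moreover have "finite {s\<in>S. x < s}" using \<open>finite S\<close> by simp
    ultimately show "next_sep x \<in> S" "x < next_sep x" "\<forall>s\<in>S. x < s \<longrightarrow> next_sep x \<le> s"
      using Min_in Min_le unfolding next_sep_def by blast+
  qed
  have less_next_sep: "next_sep x < next_sep y"
    if xy: "x \<in> G - {Max G}" "y \<in> G - {Max G}" "x < y" for x y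
  proof -
    obtain s where "s \<in> S" "x < s" "s < y" using sep[of x y] xy by blast
    then have "next_sep x \<le> s" using next_sep(3)[OF xy(1)] by blast
    with \<open>s < y\<close> next_sep(2)[OF xy(2)] show ?thesis by linarith
  qed
  have "inj_on next_sep (G - {Max G})"
  proof (rule inj_onI)
    fix x y assume "x \<in> G - {Max G}" "y \<in> G - {Max G}" "next_sep x = next_sep y"
    then show "x = y" using less_next_sep[of x y] less_next_sep[of y x] by (cases x y rule: linorder_cases) auto
  qed
  then have "card (G - {Max G}) \<le> card S"
    using next_sep(1) \<open>finite S\<close> by (intro card_inj_on_le) auto
  then show ?thesis using \<open>finite G\<close> Max_in[OF \<open>finite G\<close> False] by simp
qed simp

lemma card_le_Suc_card_if_separated:
  fixes G S :: "real set"
  assumes "finite S" and sep: "\<And>x y. x \<in> G \<Longrightarrow> y \<in> G \<Longrightarrow> x < y \<Longrightarrow> \<exists>s\<in>S. x < s \<and> s < y"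
  shows "finite G \<and> card G \<le> card S + 1"
proof -
  have bound: "card F \<le> card S + 1" if "F \<subseteq> G" "finite F" for F
    using card_le_Suc_card_if_separated_finite[OF \<open>finite F\<close> \<open>finite S\<close>] sep that by blast
  have "finite G"
  proof (rule ccontr)
    assume "infinite G"
    then obtain F where "F \<subseteq> G" "finite F" "card F = card S + 2"
      using infinite_arbitrarily_large by blast
    then show False using bound[of F] by simp
  qed
  then show ?thesis using bound by blast
qed

lemma finite_card_Un_le:
  assumes "finite A \<and> card A \<le> k" "finite B \<and> card B \<le> m"
  shows "finite (A \<union> B) \<and> card (A \<union> B) \<le> k + m"
  using assms card_Un_le[of A B] by auto

section \<open>The shortcut principle for minimal trajectoids\<close>

locale minimal_trajectoid =
  fixes n :: nat and alpha beta :: "nat \<Rightarrow> real" and a b :: real and T :: "real \<Rightarrow> nat"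
  assumes ab: "a < b"
    and nonhoriz: "\<forall>i<n. alpha i \<noteq> 0"
    and no_three: "\<forall>i<n. \<forall>j<n. \<forall>k<n. \<forall>t. i \<noteq> j \<and> j \<noteq> k \<and> i \<noteq> k \<longrightarrow>
               \<not> (entpos alpha beta i t = entpos alpha beta j t \<and>
                  entpos alpha beta j t = entpos alpha beta k t)"
    and traj: "is_trajectoid alpha beta n a b T"
    and minimal: "\<forall>T'. is_trajectoid alpha beta n a b T' \<longrightarrow>
                    Dprime alpha beta a b T \<le> Dprime alpha beta a b T'"
begin

abbreviation p :: "real \<Rightarrow> real" where "p \<equiv> trajectoid_curve alpha beta T"
abbreviation L :: "nat \<Rightarrow> real \<Rightarrow> real" where "L \<equiv> entpos alpha beta"

lemma continuous_on_p: "continuous_on {a..b} p"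
  using continuous_on_trajectoid_curve[OF traj] .

lemma continuous_on_p_minus_L: "S \<subseteq> {a..b} \<Longrightarrow> continuous_on S (\<lambda>u. \<sigma> * p u - \<sigma> * L i u)"
  using continuous_on_subset[OF continuous_on_p] unfolding entpos_def by (intro continuous_intros) auto

lemma T_less: "t \<in> {a..b} \<Longrightarrow> T t < n"
  using traj unfolding is_trajectoid_def by blast

lemma no_shorter_trajectoid:
  assumes traj': "is_trajectoid alpha beta n a b T'"
    and le: "\<And>u. u \<in> {a..b} \<Longrightarrow> \<bar>trajectoid_curve alpha beta T' u\<bar> \<le> \<bar>p u\<bar>"
    and "s \<in> {a..b}"
  shows "\<bar>p s\<bar> \<le> \<bar>trajectoid_curve alpha beta T' s\<bar>"
proof (rule ccontr)
  assume "\<not> ?thesis"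
  then have "Dprime alpha beta a b T' < Dprime alpha beta a b T"
    unfolding Dprime_def trajectoid_curve_def[symmetric]
    using continuous_on_trajectoid_curve[OF traj'] continuous_on_p le \<open>s \<in> {a..b}\<close>
    by (intro integral_less_if_le_and_less_at[OF ab]) (auto intro: continuous_intros)
  with minimal traj' show False by force
qed

lemma no_shortcut_along_line:
  assumes "i < n" "a \<le> c" "c < d" "d \<le> b"
    and ends: "c = a \<or> L i c = p c" "d = b \<or> L i d = p d"
    and closer: "\<forall>u\<in>{c..d}. \<bar>L i u\<bar> \<le> \<bar>p u\<bar>" and "s \<in> {c..d}"
  shows "\<bar>p s\<bar> \<le> \<bar>L i s\<bar>"
proof -
  define T' where "T' u = (if u \<in> {c..d} then i else T u)" for u
  have "is_trajectoid alpha beta n a b T'"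
    unfolding T'_def using assms(1-4) ends by (intro is_trajectoid_switch_to_line[OF traj]) auto
  moreover have curve': "trajectoid_curve alpha beta T' u = (if u \<in> {c..d} then L i u else p u)" for u
    unfolding T'_def trajectoid_curve_def by simp
  ultimately show ?thesis
    using no_shorter_trajectoid[of T' s] closer \<open>s \<in> {c..d}\<close> assms(2,4) by (simp add: curve')
qed

text \<open>If the curve is strictly farther from the axis than line i at s, it stays so until line i
  reaches the axis: otherwise, on the maximal run around s on which the curve is beyond line i,
  line i stays on the same side of the axis, and following it there shortens the trajectoid.\<close>
lemma beyond_line_until_axis:
  assumes "i < n" "s \<in> {a..b}" and \<sigma>: "\<sigma> \<in> {-1, 1}"
    and "0 < \<sigma> * L i s" "\<sigma> * L i s < \<sigma> * p s"
  shows "\<exists>z\<in>{a..b}. \<sigma> * L i z \<le> 0 \<and> (\<forall>u\<in>closed_segment s z. \<sigma> * L i u < \<sigma> * p u)"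
proof (rule ccontr)
  assume no_axis: "\<not> ?thesis"
  define q where "q u = \<sigma> * p u - \<sigma> * L i u" for u
  have "continuous_on {a..b} q" unfolding q_def by (intro continuous_on_p_minus_L) simp
  moreover have "0 < q s" using assms by (simp add: q_def)
  ultimately obtain c d where cd: "a \<le> c" "c \<le> s" "s \<le> d" "d \<le> b" "c < d"
    and ends: "c = a \<or> q c = 0" "d = b \<or> q d = 0"
    and nonneg: "\<forall>u\<in>{c..d}. 0 \<le> q u" and pos: "\<forall>u\<in>{c<..<d}. 0 < q u"
    using continuous_positive_run[OF ab _ \<open>s \<in> {a..b}\<close>] by blast
  have line_pos: "0 < \<sigma> * L i u" if "u \<in> {c..d}" "0 < q u" for u
  proof (rule ccontr)
    assume "\<not> 0 < \<sigma> * L i u"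
    moreover have "u \<in> {a..b}" using that cd by auto
    moreover have "0 < q w" if "w \<in> closed_segment s u" for w
    proof -
      have "w \<in> {c<..<d} \<or> w = s \<or> w = u"
        using that \<open>u \<in> {c..d}\<close> cd by (auto simp: closed_segment_eq_real_ivl split: if_splits)
      then show ?thesis using pos \<open>0 < q s\<close> \<open>0 < q u\<close> by auto
    qed
    ultimately show False using no_axis by (force simp: q_def)
  qed
  have "\<bar>L i u\<bar> \<le> \<bar>p u\<bar>" if "u \<in> {c..d}" for u
  proof (cases "q u = 0")
    case True
    then show ?thesis using \<sigma> by (auto simp: q_def)
  next
    case False
    then have "0 < q u" using nonneg that by force
    then show ?thesis
      using abs_less_abs_if_same_side[OF \<sigma> line_pos[OF that], of "p u"] by (simp add: q_def)
  qed
  then have "\<bar>p s\<bar> \<le> \<bar>L i s\<bar>"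
    using no_shortcut_along_line[OF \<open>i < n\<close> cd(1,5,4)] ends cd \<sigma> by (auto simp: q_def)
  moreover have "\<bar>L i s\<bar> < \<bar>p s\<bar>" using abs_less_abs_if_same_side assms(3-5) by blast
  ultimately show False by simp
qed

section \<open>Separation points\<close>

definition zero_time :: "nat \<Rightarrow> real" where
  "zero_time i = - beta i / alpha i"

lemma L_diff: "L i u - L i t = alpha i * (u - t)"
  unfolding entpos_def by (simp add: algebra_simps)

lemma L_zero_time: "i < n \<Longrightarrow> L i u = alpha i * (u - zero_time i)"
  using nonhoriz unfolding zero_time_def entpos_def by (simp add: field_simps)

lemma L_eq_0_iff: "i < n \<Longrightarrow> L i u = 0 \<longleftrightarrow> u = zero_time i"
  using L_zero_time nonhoriz by auto

lemma L_mult_L: "i < n \<Longrightarrow> L i u * L i v = (alpha i)\<^sup>2 * ((u - zero_time i) * (v - zero_time i))"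
  unfolding L_zero_time by (simp add: algebra_simps power2_eq_square)

lemma signed_L_zero_time:
  "i < n \<Longrightarrow> dir \<in> {-1, 1} \<Longrightarrow> \<sigma> * L i u = (dir * \<sigma> * alpha i) * (dir * (u - zero_time i))"
  using L_zero_time[of i u] mult_sign_swap[of dir \<sigma> "alpha i" "u - zero_time i"] by simp

lemma signed_L_pos_iff:
  assumes "i < n" "dir \<in> {-1, 1}" "0 < dir * \<sigma> * alpha i"
  shows "0 < \<sigma> * L i u \<longleftrightarrow> 0 < dir * (u - zero_time i)"
  using signed_L_zero_time[OF assms(1,2), of \<sigma> u] by (metis assms(3) mult_less_cancel_left_pos mult_zero_right)

lemma signed_L_diff:
  "dir \<in> {-1, 1} \<Longrightarrow> \<sigma> * L i u - \<sigma> * L i t = (dir * \<sigma> * alpha i) * (dir * (u - t))"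
  by (metis L_diff mult_sign_swap right_diff_distrib)

lemma signed_L_diff_crossing:
  assumes "dir \<in> {-1, 1}" "L j t = L k t"
  shows "\<sigma> * L j u - \<sigma> * L k u = (dir * \<sigma> * (alpha j - alpha k)) * (dir * (u - t))"
proof -
  have "L j u - L k u = (alpha j - alpha k) * (u - t)"
    using L_diff[of j u t] L_diff[of k u t] assms(2) unfolding left_diff_distrib by linarith
  then show ?thesis using mult_sign_swap[OF assms(1)] by (metis right_diff_distrib)
qed

lemma contact_between:
  assumes "u \<in> {a..b}" "v \<in> {a..b}" "(p u - L i u) * (p v - L i v) \<le> 0"
  shows "\<exists>w\<in>closed_segment u v. p w = L i w"
proof -
  have "closed_segment u v \<subseteq> {a..b}"
    using assms by (auto simp: closed_segment_eq_real_ivl)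
  moreover have "0 \<in> closed_segment (p u - L i u) (p v - L i v)"
    using assms(3) by (auto simp: closed_segment_eq_real_ivl mult_le_0_iff)
  ultimately show ?thesis
    using IVT'_closed_segment_real[of 0 "\<lambda>w. p w - L i w" u v]
      continuous_on_p_minus_L[of _ 1 i] by auto
qed

definition beyond :: "nat \<Rightarrow> real \<Rightarrow> bool" where
  "beyond i u \<longleftrightarrow> 0 < (p u - L i u) * L i u"

lemma beyond_if_signed:
  "\<sigma> \<in> {-1, 1} \<Longrightarrow> 0 < \<sigma> * L i u \<Longrightarrow> \<sigma> * L i u < \<sigma> * p u \<Longrightarrow> beyond i u"
  unfolding beyond_def by (auto simp: zero_less_mult_iff)

lemma contact_not_beyond: "p u = L i u \<Longrightarrow> \<not> beyond i u"
  unfolding beyond_def by simp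

text \<open>Times at which the curve leaves line i and stays strictly beyond it up to the zero of line i.
  Such points separate peaks on the same side of the axis.\<close>
definition separation_points :: "nat \<Rightarrow> real set" where
  "separation_points i = {s\<in>{a..b}. zero_time i \<in> {a..b} \<and> s \<noteq> zero_time i \<and> p s = L i s \<and>
     p (zero_time i) \<noteq> 0 \<and> (\<forall>u\<in>open_segment s (zero_time i). beyond i u)}"

lemma separation_point_unique:
  assumes "i < n" "s1 \<in> separation_points i" "s2 \<in> separation_points i"
  shows "s1 = s2"
proof (rule ccontr)
  assume "s1 \<noteq> s2"
  define z where "z = zero_time i"
  have s1: "s1 \<in> {a..b}" "z \<in> {a..b}" "s1 \<noteq> z" "p s1 = L i s1" "p z \<noteq> 0"
    "\<forall>u\<in>open_segment s1 z. beyond i u"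
    using assms(2) unfolding separation_points_def z_def by auto
  have s2: "s2 \<in> {a..b}" "s2 \<noteq> z" "p s2 = L i s2" "\<forall>u\<in>open_segment s2 z. beyond i u"
    using assms(3) unfolding separation_points_def z_def by auto
  have "s1 \<notin> closed_segment s2 z" "s2 \<notin> closed_segment s1 z"
    using s1(3,4,6) s2(2,3,4) \<open>s1 \<noteq> s2\<close> contact_not_beyond unfolding open_segment_def by blast+
  then have opposite: "s1 < z \<and> z < s2 \<or> s2 < z \<and> z < s1"
    using s1(3) s2(2) by (auto simp: closed_segment_eq_real_ivl split: if_splits)
  define u1 where "u1 = (s1 + z) / 2"
  define u2 where "u2 = (s2 + z) / 2"
  have u1: "u1 \<in> open_segment s1 z" and u2: "u2 \<in> open_segment s2 z"
    using s1(3) s2(2) by (auto simp: u1_def u2_def open_segment_eq_real_ivl)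
  have "(u1 - z) * (u2 - z) < 0"
    using opposite by (auto simp: u1_def u2_def mult_less_0_iff)
  then have "L i u1 * L i u2 < 0"
    using L_mult_L[OF \<open>i < n\<close>] nonhoriz \<open>i < n\<close> by (simp add: z_def mult_pos_neg)
  moreover have "beyond i u1" "beyond i u2" using s1(6) s2(4) u1 u2 by auto
  ultimately have "(p u1 - L i u1) * (p u2 - L i u2) \<le> 0"
    unfolding beyond_def by (auto simp: zero_less_mult_iff mult_less_0_iff mult_le_0_iff)
  moreover have "u1 \<in> {a..b}" "u2 \<in> {a..b}"
    using s1(1,2) s2(1) by (auto simp: u1_def u2_def)
  ultimately obtain w where w: "w \<in> closed_segment u1 u2" "p w = L i w"
    using contact_between by blast
  have "p z \<noteq> L i z" using s1(5) L_eq_0_iff[OF \<open>i < n\<close>, of z] z_def by simp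
  then have "w \<noteq> z" using w(2) by auto
  then have "w \<in> open_segment s1 z \<or> w \<in> open_segment s2 z"
    using w(1) opposite by (auto simp: u1_def u2_def closed_segment_eq_real_ivl open_segment_eq_real_ivl
        split: if_splits)
  then show False using w(2) s1(6) s2(4) contact_not_beyond by blast
qed

lemma nearest_contact:
  assumes "z \<in> {a..b}" "d \<in> {a..b}" "p d = L i d"
  obtains s where "s \<in> closed_segment z d" "p s = L i s"
    "\<And>u. u \<in> closed_segment z s \<Longrightarrow> u \<noteq> s \<Longrightarrow> p u \<noteq> L i u"
proof -
  define M where "M = closed_segment z d \<inter> (\<lambda>u. p u - L i u) -` {0}"
  have "closed_segment z d \<subseteq> {a..b}"
    using assms(1,2) by (auto simp: closed_segment_eq_real_ivl)
  then have "closed M"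
    unfolding M_def using continuous_on_p_minus_L[of _ 1 i]
    by (intro continuous_closed_preimage) auto
  moreover have "bounded M"
    unfolding M_def using bounded_Int compact_imp_bounded[OF compact_segment] by blast
  ultimately have "compact M" by (simp add: compact_eq_bounded_closed)
  moreover have "d \<in> M" using \<open>p d = L i d\<close> by (simp add: M_def)
  moreover have "continuous_on M (\<lambda>u. \<bar>u - z\<bar>)" by (intro continuous_intros)
  ultimately obtain s where "s \<in> M" and nearest: "\<forall>y\<in>M. \<bar>s - z\<bar> \<le> \<bar>y - z\<bar>"
    using continuous_attains_inf[of M "\<lambda>u. \<bar>u - z\<bar>"] by blast
  then have s: "s \<in> closed_segment z d" "p s = L i s" by (auto simp: M_def)
  have "p u \<noteq> L i u" if "u \<in> closed_segment z s" "u \<noteq> s" for u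
  proof
    assume "p u = L i u"
    moreover have "u \<in> closed_segment z d" "\<bar>u - z\<bar> < \<bar>s - z\<bar>"
      using that s(1) by (auto simp: closed_segment_eq_real_ivl split: if_splits)
    ultimately show False using nearest by (force simp: M_def)
  qed
  with s that show ?thesis by blast
qed

lemma separation_point_exists:
  assumes "i < n" and z: "zero_time i \<in> {a..b}" and "d \<in> {a..b}" "p d = L i d"
    and same_side: "0 < p (zero_time i) * L i d"
  shows "\<exists>s\<in>closed_segment (zero_time i) d. s \<in> separation_points i"
proof -
  define z where "z = zero_time i"
  obtain s where s: "s \<in> closed_segment z d" "p s = L i s"
    and no_contact: "\<And>u. u \<in> closed_segment z s \<Longrightarrow> u \<noteq> s \<Longrightarrow> p u \<noteq> L i u"
    using nearest_contact[OF z \<open>d \<in> {a..b}\<close> \<open>p d = L i d\<close>] unfolding z_def by blast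
  have seg: "closed_segment z s \<subseteq> {a..b}"
    using z \<open>d \<in> {a..b}\<close> s(1) by (auto simp: z_def closed_segment_eq_real_ivl split: if_splits)
  have "L i z = 0" using L_eq_0_iff[OF \<open>i < n\<close>] by (simp add: z_def)
  moreover have "p z \<noteq> 0" using same_side by (auto simp: z_def)
  ultimately have "s \<noteq> z" using s(2) by auto
  have "beyond i u" if u: "u \<in> open_segment s z" for u
  proof -
    have u_seg: "u \<in> closed_segment z s" "u \<noteq> s" "u \<noteq> z"
      using u by (auto simp: open_segment_def closed_segment_commute)
    have "0 < (p u - L i u) * p z"
    proof (rule ccontr)
      assume "\<not> ?thesis"
      then have "(p z - L i z) * (p u - L i u) \<le> 0"
        using \<open>L i z = 0\<close> by (simp add: mult.commute)
      moreover have "closed_segment z u \<subseteq> closed_segment z s - {s}"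
        using u_seg by (auto simp: closed_segment_eq_real_ivl split: if_splits)
      ultimately show False
        using contact_between[of z u i] no_contact seg u_seg(1) by blast
    qed
    moreover have "0 < (u - z) * (d - z)"
      using u_seg s(1) by (auto simp: closed_segment_eq_real_ivl zero_less_mult_iff split: if_splits)
    then have "0 < L i u * L i d"
      using L_mult_L[OF \<open>i < n\<close>] nonhoriz \<open>i < n\<close> by (simp add: z_def)
    ultimately show ?thesis
      using same_side unfolding beyond_def z_def[symmetric] by (auto simp: zero_less_mult_iff)
  qed
  then have "s \<in> separation_points i"
    using s \<open>s \<noteq> z\<close> \<open>p z \<noteq> 0\<close> seg z unfolding separation_points_def z_def by auto
  then show ?thesis using s(1) by (auto simp: z_def)
qed

text \<open>The shortcut principle, applied at points arbitrarily close after t, keeps the curve beyond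
  line k all the way to the zero of line k.\<close>
lemma separation_pointI_directed:
  assumes "k < n" "t \<in> {a..b}" "p t = L k t" and \<sigma>: "\<sigma> \<in> {-1, 1}" "0 < \<sigma> * p t"
    and dir: "dir \<in> {-1, 1}" and toward_axis: "dir * \<sigma> * alpha k < 0"
    and beyond_close: "\<And>\<epsilon>. 0 < \<epsilon> \<Longrightarrow>
      \<exists>u\<in>{a..b}. 0 < dir * (u - t) \<and> dir * (u - t) < \<epsilon> \<and> \<sigma> * L k u < \<sigma> * p u"
  shows "t \<in> separation_points k"
proof -
  define z where "z = zero_time k"
  have L_pos_iff: "0 < \<sigma> * L k u \<longleftrightarrow> dir * (u - z) < 0" for u
    using signed_L_pos_iff[OF \<open>k < n\<close>, of "- dir" \<sigma> u] dir toward_axis by (auto simp: z_def)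
  have "0 < dir * (z - t)"
    using L_pos_iff[of t] \<sigma> \<open>p t = L k t\<close> by (simp add: right_diff_distrib)
  have beyond_up_to_z: "w \<in> {a..b} \<and> \<sigma> * L k w < \<sigma> * p w"
    if w: "0 < dir * (w - t)" "dir * (w - z) \<le> 0" for w
  proof -
    obtain u where u: "u \<in> {a..b}" "0 < dir * (u - t)" "dir * (u - t) < dir * (w - t)"
      "\<sigma> * L k u < \<sigma> * p u"
      using beyond_close[OF w(1)] by blast
    have "dir * (u - z) < 0" using u(3) w(2) by (simp add: right_diff_distrib)
    then obtain z' where z': "z' \<in> {a..b}" "\<sigma> * L k z' \<le> 0"
      and beyond: "\<forall>v\<in>closed_segment u z'. \<sigma> * L k v < \<sigma> * p v"
      using beyond_line_until_axis[OF \<open>k < n\<close> u(1) \<sigma>(1)] u(4) L_pos_iff by blast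
    have "0 \<le> dir * (z' - z)" using L_pos_iff[of z'] z'(2) by linarith
    then have "w \<in> closed_segment u z'"
      using u(3) w(2) by (intro closed_segment_if_directed[OF dir]) (auto simp: right_diff_distrib)
    moreover have "closed_segment u z' \<subseteq> {a..b}"
      using u(1) z'(1) by (auto simp: closed_segment_eq_real_ivl)
    ultimately show ?thesis using beyond by auto
  qed
  have "z \<in> {a..b}" "0 < \<sigma> * p z"
    using beyond_up_to_z[of z] \<open>0 < dir * (z - t)\<close> L_eq_0_iff[OF \<open>k < n\<close>, of z]
    by (auto simp: z_def)
  moreover have "beyond k w" if "w \<in> open_segment t z" for w
    using open_segment_directedD[OF dir that \<open>0 < dir * (z - t)\<close>] beyond_up_to_z[of w] L_pos_iff[of w]
    by (intro beyond_if_signed[OF \<sigma>(1)]) (auto simp: right_diff_distrib)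
  ultimately show ?thesis
    using \<open>t \<in> {a..b}\<close> \<open>p t = L k t\<close> \<open>0 < dir * (z - t)\<close> \<sigma>(1)
    unfolding separation_points_def z_def[symmetric] by auto
qed

text \<open>Back on line j, the curve would be beyond line k, whose zero lies before t; so it would
  still be beyond line k at t, where it touches it.\<close>
lemma steeper_line_not_used_after:
  assumes "j < n" "k < n" "t \<in> {a..b}" "p t = L j t" "p t = L k t"
    and \<sigma>: "\<sigma> \<in> {-1, 1}" "0 < \<sigma> * p t" and dir: "dir \<in> {-1, 1}"
    and away: "0 < dir * \<sigma> * alpha k" and steeper: "0 < dir * \<sigma> * (alpha j - alpha k)"
    and "u \<in> {a..b}" "0 < dir * (u - t)"
  shows "p u \<noteq> L j u"
proof
  assume "p u = L j u"
  have "0 < \<sigma> * L k u - \<sigma> * L k t"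
    using signed_L_diff[OF dir, of \<sigma> k u t] away \<open>0 < dir * (u - t)\<close> by simp
  then have "0 < \<sigma> * L k u" using \<sigma>(2) \<open>p t = L k t\<close> by simp
  moreover have "\<sigma> * L k u < \<sigma> * p u"
  proof -
    have "\<sigma> * L j u - \<sigma> * L k u = (dir * \<sigma> * (alpha j - alpha k)) * (dir * (u - t))"
      using signed_L_diff_crossing[OF dir] \<open>p t = L j t\<close> \<open>p t = L k t\<close> by simp
    then show ?thesis using mult_pos_pos[OF steeper \<open>0 < dir * (u - t)\<close>] \<open>p u = L j u\<close> by simp
  qed
  ultimately obtain z' where z': "z' \<in> {a..b}" "\<sigma> * L k z' \<le> 0"
    and beyond: "\<forall>v\<in>closed_segment u z'. \<sigma> * L k v < \<sigma> * p v"
    using beyond_line_until_axis[OF \<open>k < n\<close> \<open>u \<in> {a..b}\<close> \<sigma>(1)] by blast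
  have "(dir * \<sigma> * alpha k) * (dir * (z' - t)) < 0"
    using signed_L_diff[OF dir, of \<sigma> k z' t] z'(2) \<sigma>(2) \<open>p t = L k t\<close> by simp
  then have "dir * (z' - t) < 0" by (metis away mult_less_cancel_left_pos mult_zero_right)
  then have "t \<in> closed_segment z' u"
    using \<open>0 < dir * (u - t)\<close> by (intro closed_segment_if_directed[OF dir]) (auto simp: algebra_simps)
  then have "t \<in> closed_segment u z'" by (simp add: closed_segment_commute)
  then show False using beyond \<open>p t = L k t\<close> by auto
qed

lemma back_to_zero_without_contact:
  assumes "j < n" and \<sigma>: "\<sigma> \<in> {-1, 1}" and "t \<in> {a..b}" "t' \<in> {a..b}"
    and dir: "dir \<in> {-1, 1}" and away: "0 < dir * \<sigma> * alpha j"
    and "0 < dir * (t' - zero_time j)" and pos: "\<forall>u\<in>closed_segment t t'. 0 < \<sigma> * p u"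
    and inside: "\<sigma> * L j t < \<sigma> * p t"
  shows "zero_time j \<in> {a..b} \<and> 0 < \<sigma> * p (zero_time j) \<and>
    (\<forall>v\<in>closed_segment (zero_time j) t. p v \<noteq> L j v)"
proof -
  define z where "z = zero_time j"
  have L_pos_iff: "0 < \<sigma> * L j u \<longleftrightarrow> 0 < dir * (u - z)" for u
    unfolding z_def by (rule signed_L_pos_iff[OF \<open>j < n\<close> dir away])
  have "L j z = 0" using L_eq_0_iff[OF \<open>j < n\<close>] z_def by simp
  have "0 < dir * (t' - z)" using assms(7) by (simp add: z_def)
  show ?thesis
    unfolding z_def[symmetric]
  proof (cases "0 < \<sigma> * L j t")
    case True
    then obtain z' where z': "z' \<in> {a..b}" "\<sigma> * L j z' \<le> 0"
      and beyond: "\<forall>v\<in>closed_segment t z'. \<sigma> * L j v < \<sigma> * p v"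
      using beyond_line_until_axis[OF \<open>j < n\<close> \<open>t \<in> {a..b}\<close> \<sigma> True inside] by blast
    have "z \<in> closed_segment z' t"
      using L_pos_iff[of t] L_pos_iff[of z'] True z'(2)
      by (intro closed_segment_if_directed[OF dir]) (auto simp: algebra_simps)
    then have "closed_segment z t \<subseteq> closed_segment t z'"
      by (metis closed_segment_commute ends_in_segment(2) subset_closed_segment)
    moreover have "closed_segment t z' \<subseteq> {a..b}"
      using \<open>t \<in> {a..b}\<close> z'(1) by (auto simp: closed_segment_eq_real_ivl)
    ultimately show "z \<in> {a..b} \<and> 0 < \<sigma> * p z \<and> (\<forall>v\<in>closed_segment z t. p v \<noteq> L j v)"
      using beyond \<open>L j z = 0\<close> by fastforce
  next
    case False
    then have "z \<in> closed_segment t t'"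
      using L_pos_iff[of t] \<open>0 < dir * (t' - z)\<close>
      by (intro closed_segment_if_directed[OF dir]) (auto simp: algebra_simps)
    then have "closed_segment z t \<subseteq> closed_segment t t'"
      by (simp add: closed_segment_commute subset_closed_segment)
    moreover have "\<not> 0 < dir * (v - z)" if "v \<in> closed_segment z t" for v
      using closed_segment_directedD(2)[OF dir, of v t z] that False L_pos_iff[of t]
      by (auto simp: closed_segment_commute algebra_simps)
    moreover have "closed_segment t t' \<subseteq> {a..b}"
      using \<open>t \<in> {a..b}\<close> \<open>t' \<in> {a..b}\<close> by (auto simp: closed_segment_eq_real_ivl)
    ultimately show "z \<in> {a..b} \<and> 0 < \<sigma> * p z \<and> (\<forall>v\<in>closed_segment z t. p v \<noteq> L j v)"
      using pos L_pos_iff by fastforce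
  qed
qed

lemma separation_point_between:
  assumes "j < n" and \<sigma>: "\<sigma> \<in> {-1, 1}" and "t \<in> {a..b}" "t' \<in> {a..b}"
    and dir: "dir \<in> {-1, 1}" "0 < dir * (t' - t)" and away: "0 < dir * \<sigma> * alpha j"
    and "p t' = L j t'" and pos: "\<forall>u\<in>closed_segment t t'. 0 < \<sigma> * p u"
    and w: "w \<in> open_segment t t'" "p w = L j w"
    and inside: "\<sigma> * L j t < \<sigma> * p t"
  shows "\<exists>s\<in>open_segment t t'. s \<in> separation_points j"
proof -
  define z where "z = zero_time j"
  have L_pos_iff: "0 < \<sigma> * L j u \<longleftrightarrow> 0 < dir * (u - z)" for u
    unfolding z_def by (rule signed_L_pos_iff[OF \<open>j < n\<close> dir(1) away])
  have "0 < \<sigma> * p t'" "0 < \<sigma> * p w" using pos w(1) by (auto simp: open_segment_def)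
  then have "0 < dir * (t' - z)" "0 < dir * (w - z)"
    using L_pos_iff \<open>p t' = L j t'\<close> w(2) by auto
  then have "z \<in> {a..b}" "0 < \<sigma> * p z" and no_contact: "\<forall>v\<in>closed_segment z t. p v \<noteq> L j v"
    using back_to_zero_without_contact[OF \<open>j < n\<close> \<sigma> \<open>t \<in> {a..b}\<close> \<open>t' \<in> {a..b}\<close> dir(1) away _ pos inside]
    by (auto simp: z_def)
  have "0 < p z * L j t'"
    using \<open>0 < \<sigma> * p z\<close> \<open>0 < \<sigma> * p t'\<close> \<open>p t' = L j t'\<close> \<sigma> by (auto simp: zero_less_mult_iff)
  then obtain s where s: "s \<in> closed_segment z t'" "s \<in> separation_points j"
    using separation_point_exists[OF \<open>j < n\<close> \<open>z \<in> {a..b}\<close>[unfolded z_def] \<open>t' \<in> {a..b}\<close> \<open>p t' = L j t'\<close>]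
    by (auto simp: z_def)
  then have "p s = L j s" "s \<noteq> z" and beyond: "\<forall>u\<in>open_segment s z. beyond j u"
    unfolding separation_points_def z_def by auto
  have "0 \<le> dir * (s - z)" "0 \<le> dir * (t' - s)"
    using closed_segment_directedD[OF dir(1) s(1)] \<open>0 < dir * (t' - z)\<close> by auto
  have "0 < dir * (s - t)"
  proof (rule ccontr)
    assume "\<not> 0 < dir * (s - t)"
    then have "s \<in> closed_segment z t"
      using \<open>0 \<le> dir * (s - z)\<close> by (intro closed_segment_if_directed[OF dir(1)]) (auto simp: algebra_simps)
    then show False using no_contact \<open>p s = L j s\<close> by blast
  qed
  moreover have "0 < dir * (t' - s)"
  proof (rule ccontr)
    assume "\<not> 0 < dir * (t' - s)"
    then have "s = t'" using \<open>0 \<le> dir * (t' - s)\<close> dir(1) by auto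
    moreover have "0 < dir * (t' - w)"
      using open_segment_directedD[OF dir(1) w(1) dir(2)] by simp
    ultimately have "w \<in> open_segment s z"
      using \<open>0 < dir * (w - z)\<close> open_segment_if_directed[OF dir(1)] by (metis open_segment_commute)
    then show False using beyond w(2) contact_not_beyond by blast
  qed
  ultimately show ?thesis using s(2) open_segment_if_directed[OF dir(1)] by blast
qed

section \<open>Peaks\<close>

definition zeros :: "real set" where
  "zeros = {u\<in>{a..b}. p u = 0}"

definition last_contacts :: "nat \<Rightarrow> real set" where
  "last_contacts i = {t\<in>{a..b}. p t = L i t \<and> (\<forall>u\<in>{a..b}. t < u \<longrightarrow> p u \<noteq> L i u)}"

definition first_contacts :: "nat \<Rightarrow> real set" where
  "first_contacts i = {t\<in>{a..b}. p t = L i t \<and> (\<forall>u\<in>{a..b}. u < t \<longrightarrow> p u \<noteq> L i u)}"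

text \<open>A peak is a local maximum of the distance of the curve to the axis.\<close>
definition peak :: "real \<Rightarrow> real \<Rightarrow> bool" where
  "peak \<sigma> t \<longleftrightarrow> t \<in> {a<..<b} \<and> 0 < \<sigma> * p t \<and>
     (\<exists>j<n. \<exists>k<n. 0 < \<sigma> * alpha j \<and> \<sigma> * alpha k < 0 \<and> p t = L j t \<and> p t = L k t \<and>
        (\<exists>\<epsilon>>0. \<forall>u. t - \<epsilon> < u \<and> u < t \<longrightarrow> p u = L j u) \<and>
        (\<exists>\<epsilon>>0. \<forall>u. t < u \<and> u < t + \<epsilon> \<longrightarrow> p u = L k u))"

definition peaks :: "real set" where
  "peaks = {t. peak 1 t \<or> peak (-1) t}"

lemma zero_between:
  assumes "t1 \<in> {a..b}" "t2 \<in> {a..b}" "t1 < t2" "p t1 * p t2 < 0"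
  shows "\<exists>u. t1 < u \<and> u < t2 \<and> u \<in> zeros"
proof -
  have "continuous_on {t1..t2} p" using continuous_on_subset[OF continuous_on_p] assms(1,2) by auto
  moreover have "p t1 < 0 \<and> 0 < p t2 \<or> p t2 < 0 \<and> 0 < p t1" using assms(4) by (auto simp: mult_less_0_iff)
  ultimately obtain u where "t1 \<le> u" "u \<le> t2" "p u = 0"
    using IVT'[of p t1 0 t2] IVT2'[of p t2 0 t1] \<open>t1 < t2\<close> by force
  moreover have "u \<noteq> t1" "u \<noteq> t2" using \<open>p u = 0\<close> assms(4) by auto
  ultimately have "t1 < u" "u < t2" "u \<in> zeros" using assms(1,2) unfolding zeros_def by auto
  then show ?thesis by blast
qed

lemma same_side_if_no_zero_between:
  assumes "t1 \<in> {a..b}" "t2 \<in> {a..b}" "t1 < t2" and \<sigma>: "\<sigma> \<in> {-1, 1}" "0 < \<sigma> * p t1" "0 < \<sigma> * p t2"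
    and no_zero: "\<forall>u. t1 < u \<and> u < t2 \<longrightarrow> u \<notin> zeros"
  shows "\<forall>u\<in>closed_segment t1 t2. 0 < \<sigma> * p u"
proof (rule ccontr)
  assume "\<not> ?thesis"
  then obtain u where "u \<in> closed_segment t1 t2" "\<not> 0 < \<sigma> * p u" by blast
  then have u: "t1 < u" "u < t2" "\<sigma> * p u \<le> 0"
    using \<open>t1 < t2\<close> \<sigma>(2,3) by (auto simp: closed_segment_eq_real_ivl less_le)
  with \<sigma> have "p t1 * p u \<le> 0" by (auto simp: mult_le_0_iff zero_less_mult_iff)
  moreover have "u \<in> {a..b}" using u assms(1,2) by auto
  ultimately show False
  proof (cases "p u = 0")
    case True
    then show ?thesis using no_zero u(1,2) \<open>u \<in> {a..b}\<close> unfolding zeros_def by auto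
  next
    case False
    with \<open>p t1 * p u \<le> 0\<close> \<sigma>(2) have "p t1 * p u < 0" by (auto simp: less_le)
    then obtain w where "t1 < w" "w < u" "w \<in> zeros"
      using zero_between[OF \<open>t1 \<in> {a..b}\<close> \<open>u \<in> {a..b}\<close> u(1)] by blast
    then show ?thesis using no_zero u(2) by auto
  qed
qed

lemma peakE:
  assumes "peak \<sigma> t"
  obtains j k where "t \<in> {a..b}" "0 < \<sigma> * p t" "j < n" "k < n" "0 < \<sigma> * alpha j" "\<sigma> * alpha k < 0"
    "p t = L j t" "p t = L k t"
    "\<And>t0. t0 < t \<Longrightarrow> \<exists>u\<in>open_segment t0 t. p u = L j u"
    "\<And>t1. t < t1 \<Longrightarrow> \<exists>u\<in>open_segment t t1. p u = L k u"
proof -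
  obtain j k e1 e2 where "t \<in> {a<..<b}" "0 < \<sigma> * p t" "j < n" "k < n" "0 < \<sigma> * alpha j"
    "\<sigma> * alpha k < 0" "p t = L j t" "p t = L k t"
    and e1: "0 < e1" "\<forall>u. t - e1 < u \<and> u < t \<longrightarrow> p u = L j u"
    and e2: "0 < e2" "\<forall>u. t < u \<and> u < t + e2 \<longrightarrow> p u = L k u"
    using assms unfolding peak_def by blast
  moreover have "\<exists>u\<in>open_segment t0 t. p u = L j u" if "t0 < t" for t0
    using e1 that by (intro bexI[of _ "max ((t0 + t) / 2) (t - e1 / 2)"])
      (auto simp: open_segment_eq_real_ivl max_def)
  moreover have "\<exists>u\<in>open_segment t t1. p u = L k u" if "t < t1" for t1
    using e2 that by (intro bexI[of _ "min ((t + t1) / 2) (t + e2 / 2)"])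
      (auto simp: open_segment_eq_real_ivl min_def)
  ultimately show ?thesis using that by auto
qed

text \<open>The line on which the curve arrives at the second peak, and the one on which it leaves the
  first, would each reach the far peak no nearer to the axis than the curve, which is impossible
  as the first rises and the second falls.\<close>
lemma zero_or_separation_point_between_peaks:
  assumes \<sigma>: "\<sigma> \<in> {-1, 1}" and "peak \<sigma> t1" "peak \<sigma> t2" "t1 < t2"
  shows "\<exists>u. t1 < u \<and> u < t2 \<and> (u \<in> zeros \<or> (\<exists>i<n. u \<in> separation_points i))"
proof (rule ccontr)
  assume none: "\<not> ?thesis"
  obtain k1 where t1: "t1 \<in> {a..b}" "0 < \<sigma> * p t1"
    and k1: "k1 < n" "\<sigma> * alpha k1 < 0" "p t1 = L k1 t1"
    and after: "\<exists>u\<in>open_segment t1 t2. p u = L k1 u"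
    using peakE[OF \<open>peak \<sigma> t1\<close>] \<open>t1 < t2\<close> by metis
  obtain j2 where t2: "t2 \<in> {a..b}" "0 < \<sigma> * p t2"
    and j2: "j2 < n" "0 < \<sigma> * alpha j2" "p t2 = L j2 t2"
    and before: "\<exists>u\<in>open_segment t1 t2. p u = L j2 u"
    using peakE[OF \<open>peak \<sigma> t2\<close>] \<open>t1 < t2\<close> by metis
  have pos: "\<forall>u\<in>closed_segment t1 t2. 0 < \<sigma> * p u"
    using same_side_if_no_zero_between[OF t1(1) t2(1) \<open>t1 < t2\<close> \<sigma> t1(2) t2(2)] none by blast
  have no_sep: "\<forall>s\<in>open_segment t1 t2. s \<notin> separation_points i" if "i < n" for i
    using none that \<open>t1 < t2\<close> by (auto simp: open_segment_eq_real_ivl)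
  have "\<not> \<sigma> * L j2 t1 < \<sigma> * p t1"
    using separation_point_between[OF j2(1) \<sigma> t1(1) t2(1), where dir = 1]
      \<open>t1 < t2\<close> j2 pos before no_sep[OF j2(1)] by auto
  moreover have "\<not> \<sigma> * L k1 t2 < \<sigma> * p t2"
    using separation_point_between[OF k1(1) \<sigma> t2(1) t1(1), where dir = "-1"]
      \<open>t1 < t2\<close> k1 pos after no_sep[OF k1(1)] by (auto simp: closed_segment_commute open_segment_commute)
  moreover have "\<sigma> * L j2 t2 - \<sigma> * L j2 t1 = (\<sigma> * alpha j2) * (t2 - t1)"
    "\<sigma> * L k1 t2 - \<sigma> * L k1 t1 = (\<sigma> * alpha k1) * (t2 - t1)"
    using signed_L_diff[of 1] by auto
  moreover have "0 < (\<sigma> * alpha j2) * (t2 - t1)" "(\<sigma> * alpha k1) * (t2 - t1) < 0"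
    using j2(2) k1(2) \<open>t1 < t2\<close> by (auto simp: mult_neg_pos)
  ultimately show False using j2(3) k1(3) by auto
qed

lemma peaks_separated:
  assumes "x \<in> peaks" "y \<in> peaks" "x < y"
  shows "\<exists>s\<in>zeros \<union> (\<Union>i<n. separation_points i). x < s \<and> s < y"
proof -
  obtain \<sigma>x \<sigma>y where \<sigma>: "\<sigma>x \<in> {-1, 1}" "\<sigma>y \<in> {-1, 1}" and "peak \<sigma>x x" "peak \<sigma>y y"
    using assms(1,2) unfolding peaks_def by auto
  then have "x \<in> {a..b}" "y \<in> {a..b}" "0 < \<sigma>x * p x" "0 < \<sigma>y * p y"
    unfolding peak_def by auto
  show ?thesis
  proof (cases "\<sigma>x = \<sigma>y")
    case True
    then show ?thesis
      using zero_or_separation_point_between_peaks[OF \<sigma>(1) \<open>peak \<sigma>x x\<close> _ \<open>x < y\<close>] \<open>peak \<sigma>y y\<close>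
      by blast
  next
    case False
    with \<sigma> \<open>0 < \<sigma>x * p x\<close> \<open>0 < \<sigma>y * p y\<close> have "p x * p y < 0"
      by (auto simp: mult_less_0_iff)
    then show ?thesis using zero_between[OF \<open>x \<in> {a..b}\<close> \<open>y \<in> {a..b}\<close> \<open>x < y\<close>] by blast
  qed
qed

section \<open>Classification and counting of vertices\<close>

lemma finite_zeros: "finite zeros \<and> card zeros \<le> n"
proof -
  have "inj_on T zeros"
  proof (rule inj_onI)
    fix x y assume "x \<in> zeros" "y \<in> zeros" "T x = T y"
    then have "L (T x) x = 0" "L (T x) y = 0" "T x < n"
      using T_less unfolding zeros_def trajectoid_curve_def by auto
    then show "x = y" using L_eq_0_iff by simp
  qed
  moreover have "T ` zeros \<subseteq> {..<n}" using T_less unfolding zeros_def by auto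
  ultimately show ?thesis
    using card_inj_on_le[of T zeros "{..<n}"] finite_imageD[of T zeros] finite_subset[of "T ` zeros"] by auto
qed

lemma finite_separation_points:
  "finite (\<Union>i<n. separation_points i) \<and> card (\<Union>i<n. separation_points i) \<le> n"
  using separation_point_unique by (intro card_UN_subsingletons_le) blast

lemma finite_last_contacts: "finite (\<Union>i<n. last_contacts i) \<and> card (\<Union>i<n. last_contacts i) \<le> n"
proof (intro card_UN_subsingletons_le)
  fix i x y assume "x \<in> last_contacts i" "y \<in> last_contacts i"
  then show "x = y" by (cases x y rule: linorder_cases) (auto simp: last_contacts_def)
qed

lemma finite_first_contacts: "finite (\<Union>i<n. first_contacts i) \<and> card (\<Union>i<n. first_contacts i) \<le> n"
proof (intro card_UN_subsingletons_le)
  fix i x y assume "x \<in> first_contacts i" "y \<in> first_contacts i"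
  then show "x = y" by (cases x y rule: linorder_cases) (auto simp: first_contacts_def)
qed

lemma finite_peaks: "finite peaks \<and> card peaks \<le> 2 * n + 1"
proof -
  have fin: "finite (zeros \<union> (\<Union>i<n. separation_points i))"
    using finite_zeros finite_separation_points by blast
  have card: "card (zeros \<union> (\<Union>i<n. separation_points i)) \<le> 2 * n"
    using finite_zeros finite_separation_points card_Un_le[of zeros "\<Union>i<n. separation_points i"]
    by linarith
  have "finite peaks \<and> card peaks \<le> card (zeros \<union> (\<Union>i<n. separation_points i)) + 1"
    using peaks_separated by (intro card_le_Suc_card_if_separated[OF fin])
  with card show ?thesis by linarith
qed

lemma vertex_between_two_lines:
  assumes "t \<in> vertex_times alpha beta a b T"
  obtains i j \<delta> where "i < n" "j < n" "alpha i \<noteq> alpha j" "p t = L i t" "p t = L j t" "0 < \<delta>"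
    "\<And>s. s \<in> {a..b} \<Longrightarrow> \<bar>s - t\<bar> < \<delta> \<Longrightarrow> p s = L i s \<or> p s = L j s"
proof -
  have "t \<in> {a..b}" using assms unfolding vertex_times_def by auto
  then obtain \<delta> where "0 < \<delta>" and \<delta>: "\<And>s. s \<in> {a..b} \<Longrightarrow> \<bar>s - t\<bar> < \<delta> \<Longrightarrow> L (T s) t = p t"
    using traj unfolding is_trajectoid_def trajectoid_curve_def by blast
  obtain s0 where "s0 \<in> {a..b}" "\<bar>s0 - t\<bar> < \<delta>" and other: "(alpha (T s0), beta (T s0)) \<noteq> (alpha (T t), beta (T t))"
    using assms \<open>0 < \<delta>\<close> unfolding vertex_times_def by blast
  define i j where "i = T t" and "j = T s0"
  have "i < n" "j < n" using T_less \<open>t \<in> {a..b}\<close> \<open>s0 \<in> {a..b}\<close> by (auto simp: i_def j_def)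
  have "p t = L i t" "p t = L j t"
    using \<delta>[OF \<open>s0 \<in> {a..b}\<close> \<open>\<bar>s0 - t\<bar> < \<delta>\<close>] by (auto simp: i_def j_def trajectoid_curve_def)
  have "alpha i \<noteq> alpha j"
    using \<open>p t = L i t\<close> \<open>p t = L j t\<close> other unfolding i_def j_def entpos_def by auto
  moreover have "p s = L i s \<or> p s = L j s" if "s \<in> {a..b}" "\<bar>s - t\<bar> < \<delta>" for s
  proof (rule ccontr)
    assume "\<not> ?thesis"
    then have "T s \<noteq> i" "T s \<noteq> j" by (auto simp: trajectoid_curve_def)
    moreover have "i \<noteq> j" using other by (auto simp: i_def j_def)
    moreover have "L (T s) t = p t" using \<delta> that by blast
    ultimately show False
      using no_three \<open>i < n\<close> \<open>j < n\<close> T_less[OF that(1)] \<open>p t = L i t\<close> \<open>p t = L j t\<close> by metis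
  qed
  ultimately show ?thesis using that \<open>i < n\<close> \<open>j < n\<close> \<open>p t = L i t\<close> \<open>p t = L j t\<close> \<open>0 < \<delta>\<close> by blast
qed

lemma separation_point_if_steeper_line_used_after:
  assumes "X < n" "Y < n" "t \<in> {a..b}" "p t = L X t" "p t = L Y t"
    and \<sigma>: "\<sigma> \<in> {-1, 1}" "0 < \<sigma> * p t" and dir: "dir \<in> {-1, 1}"
    and toward_axis: "dir * \<sigma> * alpha Y < 0" and steeper: "0 < dir * \<sigma> * (alpha X - alpha Y)"
    and used: "\<And>\<epsilon>. 0 < \<epsilon> \<Longrightarrow> \<exists>u\<in>{a..b}. 0 < dir * (u - t) \<and> dir * (u - t) < \<epsilon> \<and> p u = L X u"
  shows "t \<in> separation_points Y"
proof (rule separation_pointI_directed[OF \<open>Y < n\<close> \<open>t \<in> {a..b}\<close> \<open>p t = L Y t\<close> \<sigma> dir toward_axis])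
  fix \<epsilon> :: real assume "0 < \<epsilon>"
  then obtain u where u: "u \<in> {a..b}" "0 < dir * (u - t)" "dir * (u - t) < \<epsilon>" "p u = L X u"
    using used by blast
  have "\<sigma> * L X u - \<sigma> * L Y u = (dir * \<sigma> * (alpha X - alpha Y)) * (dir * (u - t))"
    using signed_L_diff_crossing[OF dir] \<open>p t = L X t\<close> \<open>p t = L Y t\<close> by simp
  also have "0 < \<dots>" using steeper u(2) by (rule mult_pos_pos)
  finally show "\<exists>u\<in>{a..b}. 0 < dir * (u - t) \<and> dir * (u - t) < \<epsilon> \<and> \<sigma> * L Y u < \<sigma> * p u"
    using u by auto
qed

lemma peak_or_separation_point:
  assumes "X < n" "Y < n" "t \<in> {a<..<b}" "p t = L X t" "p t = L Y t"
    and \<sigma>: "\<sigma> \<in> {-1, 1}" "0 < \<sigma> * p t" and "0 < \<sigma> * alpha X" "\<sigma> * alpha Y < 0"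
    and "0 < \<delta>" and near: "\<And>s. s \<in> {a..b} \<Longrightarrow> \<bar>s - t\<bar> < \<delta> \<Longrightarrow> p s = L X s \<or> p s = L Y s"
  shows "t \<in> separation_points X \<or> t \<in> separation_points Y \<or> peak \<sigma> t"
proof -
  have "t \<in> {a..b}" using assms(3) by auto
  consider (after) "\<forall>\<epsilon>>0. \<exists>u\<in>{a..b}. 0 < u - t \<and> u - t < \<epsilon> \<and> p u = L X u"
    | (before) "\<forall>\<epsilon>>0. \<exists>u\<in>{a..b}. 0 < t - u \<and> t - u < \<epsilon> \<and> p u = L Y u"
    | (neither) e1 e2 where "0 < e1" "\<forall>u\<in>{a..b}. 0 < u - t \<longrightarrow> u - t < e1 \<longrightarrow> p u \<noteq> L X u"
        "0 < e2" "\<forall>u\<in>{a..b}. 0 < t - u \<longrightarrow> t - u < e2 \<longrightarrow> p u \<noteq> L Y u"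
    by blast
  then show ?thesis
  proof cases
    case after
    then have "t \<in> separation_points Y"
      using assms \<open>t \<in> {a..b}\<close>
      by (intro separation_point_if_steeper_line_used_after[where dir = 1]) auto
    then show ?thesis by blast
  next
    case before
    then have "t \<in> separation_points X"
      using assms \<open>t \<in> {a..b}\<close>
      by (intro separation_point_if_steeper_line_used_after[where X = Y and Y = X and dir = "-1"]) auto
    then show ?thesis by blast
  next
    case neither
    have "p u = L X u" if "t - min e2 (min \<delta> (t - a)) < u" "u < t" for u
      using near[of u] neither(4) that assms(3) by auto
    moreover have "p u = L Y u" if "t < u" "u < t + min e1 (min \<delta> (b - t))" for u
      using near[of u] neither(2) that assms(3) by auto
    moreover have "0 < min e2 (min \<delta> (t - a))" "0 < min e1 (min \<delta> (b - t))"
      using neither(1,3) \<open>0 < \<delta>\<close> assms(3) by auto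
    ultimately have "peak \<sigma> t"
      unfolding peak_def using assms by blast
    then show ?thesis by blast
  qed
qed

lemma crossing_classification:
  assumes "X < n" "Y < n" "t \<in> {a<..<b}" "p t = L X t" "p t = L Y t"
    and \<sigma>: "\<sigma> \<in> {-1, 1}" "0 < \<sigma> * p t" and steeper: "\<sigma> * alpha Y < \<sigma> * alpha X"
    and "0 < \<delta>" and near: "\<And>s. s \<in> {a..b} \<Longrightarrow> \<bar>s - t\<bar> < \<delta> \<Longrightarrow> p s = L X s \<or> p s = L Y s"
  shows "t \<in> (\<Union>i<n. separation_points i) \<union> (\<Union>i<n. last_contacts i) \<union> (\<Union>i<n. first_contacts i) \<union> peaks"
proof -
  have "t \<in> {a..b}" using assms(3) by auto
  have "\<sigma> * alpha X \<noteq> 0" "\<sigma> * alpha Y \<noteq> 0" using nonhoriz \<sigma>(1) assms(1,2) by auto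
  then consider "0 < \<sigma> * alpha Y" | "\<sigma> * alpha X < 0" | "0 < \<sigma> * alpha X" "\<sigma> * alpha Y < 0"
    using steeper by linarith
  then show ?thesis
  proof cases
    case 1
    have "t \<in> last_contacts X"
      unfolding last_contacts_def
      using steeper_line_not_used_after[OF assms(1,2) \<open>t \<in> {a..b}\<close> assms(4,5) \<sigma>, where dir = 1]
        1 steeper \<open>t \<in> {a..b}\<close> assms(4) by (auto simp: algebra_simps)
    then show ?thesis using assms(1) by blast
  next
    case 2
    have "t \<in> first_contacts Y"
      unfolding first_contacts_def
      using steeper_line_not_used_after[OF assms(2,1) \<open>t \<in> {a..b}\<close> assms(5,4) \<sigma>, where dir = "-1"]
        2 steeper \<open>t \<in> {a..b}\<close> assms(5) by (auto simp: algebra_simps)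
    then show ?thesis using assms(2) by blast
  next
    case 3
    then have "t \<in> separation_points X \<or> t \<in> separation_points Y \<or> peak \<sigma> t"
      using peak_or_separation_point[OF assms(1-5) \<sigma> _ _ \<open>0 < \<delta>\<close> near] by blast
    then show ?thesis using assms(1,2) \<sigma>(1) unfolding peaks_def by blast
  qed
qed

lemma vertex_classification:
  assumes "t \<in> vertex_times alpha beta a b T"
  shows "t \<in> zeros \<union> (\<Union>i<n. separation_points i) \<union> (\<Union>i<n. last_contacts i) \<union>
      (\<Union>i<n. first_contacts i) \<union> peaks"
proof (cases "p t = 0")
  case True
  then show ?thesis using assms unfolding vertex_times_def zeros_def by auto
next
  case False
  obtain i j \<delta> where ij: "i < n" "j < n" "alpha i \<noteq> alpha j" "p t = L i t" "p t = L j t"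
    and "0 < \<delta>" and near: "\<And>s. s \<in> {a..b} \<Longrightarrow> \<bar>s - t\<bar> < \<delta> \<Longrightarrow> p s = L i s \<or> p s = L j s"
    using vertex_between_two_lines[OF assms] by blast
  have t: "t \<in> {a<..<b}" using assms unfolding vertex_times_def by auto
  have \<sigma>: "sgn (p t) \<in> {-1, 1}" "0 < sgn (p t) * p t" using False by (auto simp: sgn_if)
  then have "sgn (p t) * alpha i \<noteq> sgn (p t) * alpha j" using ij(3) by auto
  then consider "sgn (p t) * alpha j < sgn (p t) * alpha i" | "sgn (p t) * alpha i < sgn (p t) * alpha j"
    by linarith
  then show ?thesis
  proof cases
    case 1
    then show ?thesis using crossing_classification[OF ij(1,2) t ij(4,5) \<sigma> 1 \<open>0 < \<delta>\<close> near] by blast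
  next
    case 2
    then show ?thesis using crossing_classification[OF ij(2,1) t ij(5,4) \<sigma> 2 \<open>0 < \<delta>\<close>] near by blast
  qed
qed

end

theorem mainTheorem16:
  fixes n :: nat and alpha beta :: "nat \<Rightarrow> real" and a b :: real and T :: "real \<Rightarrow> nat"
  assumes "a < b"
    and nonhoriz: "\<forall>i<n. alpha i \<noteq> 0"
    and no_three: "\<forall>i<n. \<forall>j<n. \<forall>k<n. \<forall>t. i \<noteq> j \<and> j \<noteq> k \<and> i \<noteq> k \<longrightarrow>
               \<not> (entpos alpha beta i t = entpos alpha beta j t \<and>
                  entpos alpha beta j t = entpos alpha beta k t)"
    and traj: "is_trajectoid alpha beta n a b T"
    and minimal: "\<forall>T'. is_trajectoid alpha beta n a b T' \<longrightarrow>
                    Dprime alpha beta a b T \<le> Dprime alpha beta a b T'"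
  shows "finite (vertex_times alpha beta a b T) \<and> card (vertex_times alpha beta a b T) \<le> 8 * n"
proof -
  interpret minimal_trajectoid n alpha beta a b T
    using assms by unfold_locales auto
  let ?U = "zeros \<union> (\<Union>i<n. separation_points i) \<union> (\<Union>i<n. last_contacts i) \<union>
      (\<Union>i<n. first_contacts i) \<union> peaks"
  have sub: "vertex_times alpha beta a b T \<subseteq> ?U"
    using vertex_classification by blast
  have U: "finite ?U \<and> card ?U \<le> n + n + n + n + (2 * n + 1)"
    by (intro finite_card_Un_le finite_zeros finite_separation_points finite_last_contacts
        finite_first_contacts finite_peaks)
  then have "card (vertex_times alpha beta a b T) \<le> 6 * n + 1"
    using card_mono[OF _ sub] by fastforce
  moreover have "1 \<le> n" using T_less[of a] \<open>a < b\<close> by simp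
  ultimately show ?thesis using U finite_subset[OF sub] by simp
qed

end
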